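(* Fix a pair of linear projections $\pi_1,\pi_2:\mathbb P^3\dashrightarrow\mathbb P^2$ with non-coincident centers $c_1,c_2$, and let $F$ be its fundamental matrix. There is a $1:1$ correspondence between the quadric surfaces $Q\subset\mathbb P^3$ passing through $c_1,c_2$ and the lines $\ell\subset\mathbb P(\mathbb C^{3\times3})$ passing through $F$.
   Context: Work over $\mathbb C$. A linear projection $\pi:\mathbb P^3\dashrightarrow\mathbb P^2$ is $p\mapsto Ap$ with $A\in\mathbb C^{3\times4}$ of rank three; its center spans $\ker A$. The fundamental matrix of $(\pi_1,\pi_2)$ is the (unique up to scale) rank-two matrix $F\in\mathbb P(\mathbb C^{3\times3})$ with $\pi_2(p)^\top F\pi_1(p)=0$ for all $p\in\mathbb P^3$. *)

theory Defs
  imports "HOL-Analysis.Analysis"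
begin

definition bdot :: "complex^'n \<Rightarrow> complex^'n \<Rightarrow> complex" where
  "bdot x y = (\<Sum>i\<in>UNIV. x$i * y$i)"

definition qf :: "complex^4^4 \<Rightarrow> complex^4 \<Rightarrow> complex" where
  "qf S x = bdot x (S *v x)"

text \<open>The projective line in P(C^{3x3}) through [F] and [M], as the 2-dim
  complex linear span of F and M.\<close>
definition pline :: "complex^3^3 \<Rightarrow> complex^3^3 \<Rightarrow> (complex^3^3) set" where
  "pline F M = {mat a ** F + mat b ** M | a b. True}"

definition lines_through :: "complex^3^3 \<Rightarrow> (complex^3^3) set set" where
  "lines_through F = {pline F M | M. \<forall>t. M \<noteq> mat t ** F}"

text \<open>A quadric surface in P^3, i.e. a point of P(Sym^2 C^4), represented by
  the complex line spanned by a symmetric 4x4 matrix.\<close>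
definition qpoint :: "complex^4^4 \<Rightarrow> (complex^4^4) set" where
  "qpoint S = {mat b ** S | b. True}"

definition quadrics_through :: "complex^4 \<Rightarrow> complex^4 \<Rightarrow> (complex^4^4) set set" where
  "quadrics_through c1 c2 =
     {qpoint S | S. S \<noteq> 0 \<and> transpose S = S \<and> qf S c1 = 0 \<and> qf S c2 = 0}"

end

theory Submission
  imports Defs
begin

text \<open>
  For M in C^{3x3}, the bilinear form (p, q) \<mapsto> (A2 p)^T M (A1 q) on C^4 symmetrises to a quadric
  Phi M = A2^T M A1 + A1^T M^T A2 with Phi M (p) = 2 pi2(p)^T M pi1(p), so Phi M passes through
  c1 and c2, and Phi is linear. Its kernel is the line spanned by F: if Phi M = 0, then
  A2^T M A1 is a skew form with null vectors c1 and c2, such skew forms on C^4 are all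
  proportional, and M can be recovered from A2^T M A1 because A1 and A2 have right inverses.
  Its image consists of all quadrics through c1 and c2: such a symmetric S splits as B + B^T
  with B c1 = 0 and B^T c2 = 0, and every such B is A2^T M A1 for some M. Hence Phi induces an
  isomorphism from C^{3x3}/<F> onto the quadrics through c1 and c2, whose projectivisation is
  the asserted bijection between lines through [F] and those quadrics.
\<close>

section \<open>The bilinear pairing and scalar matrices\<close>

lemma bdot_commute: "bdot x y = bdot y x"
  by (simp add: bdot_def mult.commute)

lemma bdot_add_left [simp]: "bdot (x + y) z = bdot x z + bdot y z"
  by (simp add: bdot_def distrib_right sum.distrib)

lemma bdot_add_right [simp]: "bdot z (x + y) = bdot z x + bdot z y"
  by (simp add: bdot_def distrib_left sum.distrib)

lemma bdot_scale_left [simp]: "bdot (c *s x) z = c * bdot x z"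
  by (simp add: bdot_def sum_distrib_left mult.assoc)

lemma bdot_scale_right [simp]: "bdot z (c *s x) = c * bdot z x"
  by (simp add: bdot_def sum_distrib_left mult.left_commute)

lemma bdot_zero_left [simp]: "bdot 0 z = 0"
  by (simp add: bdot_def)

lemma bdot_zero_right [simp]: "bdot z 0 = 0"
  by (simp add: bdot_def)

lemma bdot_uminus_left [simp]: "bdot (- x) z = - bdot x z"
  by (simp add: bdot_def sum_negf)

lemma bdot_uminus_right [simp]: "bdot z (- x) = - bdot z x"
  by (simp add: bdot_def sum_negf)

lemma bdot_axis_left [simp]: "bdot (axis i a) v = a * v $ i"
  by (simp add: bdot_def axis_def if_distrib if_distribR cong: if_cong)

lemma bdot_vector_matrix: "bdot (x v* A) y = bdot x (A *v y)"
proof -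
  have "bdot (x v* A) y = (\<Sum>j\<in>UNIV. \<Sum>i\<in>UNIV. x$i * A$i$j * y$j)"
    by (simp add: bdot_def vector_matrix_mult_def sum_distrib_right)
  also have "\<dots> = (\<Sum>i\<in>UNIV. \<Sum>j\<in>UNIV. x$i * A$i$j * y$j)"
    by (rule sum.swap)
  also have "\<dots> = bdot x (A *v y)"
    by (simp add: bdot_def matrix_vector_mult_def sum_distrib_left mult.assoc)
  finally show ?thesis .
qed

lemma matrix_eqI_bdot:
  fixes A B :: "complex^'n^'m"
  assumes "\<And>x y. bdot x (A *v y) = bdot x (B *v y)"
  shows "A = B"
proof -
  have "A *v y = B *v y" for y
    using assms[of "axis i 1" y for i] by (simp add: vec_eq_iff)
  then show ?thesis
    by (simp add: matrix_eq)
qed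

lemma mat_mult_nth [simp]: "(mat a ** X) $ i $ j = a * X $ i $ j"
  for X :: "'a::comm_semiring_1^'n^'m"
  by (simp add: matrix_matrix_mult_def mat_def if_distrib if_distribR cong: if_cong)

lemma mult_mat_commute: "X ** mat a = mat a ** X"
  for X :: "'a::comm_semiring_1^'n^'m"
  by (simp add: vec_eq_iff matrix_matrix_mult_def mat_def if_distrib if_distribR mult.commute
      cong: if_cong)

lemma mat_mult_mat_mult [simp]: "mat a ** (mat b ** X) = mat (a * b) ** X"
  for X :: "'a::comm_semiring_1^'n^'m"
  by (simp add: vec_eq_iff mult.assoc)

lemma mat_mult_assoc_left [simp]: "(mat a ** X) ** Y = mat a ** (X ** Y)"
  for X :: "'a::comm_semiring_1^'n^'m"
  by (rule matrix_mul_assoc[symmetric])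

lemma mat_mult_assoc_right: "X ** (mat a ** Y) = mat a ** (X ** Y)"
  for X :: "'a::comm_semiring_1^'n^'m"
  by (simp only: matrix_mul_assoc mult_mat_commute)

lemma mat_mult_matrix_vector [simp]: "(mat a ** X) *v v = a *s (X *v v)"
  for X :: "'a::comm_semiring_1^'n^'m"
  by (simp add: vec_eq_iff matrix_vector_mult_def sum_distrib_left mult.assoc)

lemma transpose_mat_mult [simp]: "transpose (mat a ** X) = mat a ** transpose X"
  for X :: "'a::comm_semiring_1^'n^'m"
  by (simp add: matrix_transpose_mul mult_mat_commute)

lemma transpose_add [simp]: "transpose (X + Y) = transpose X + transpose Y"
  by (simp add: transpose_def vec_eq_iff)

lemma transpose_diff [simp]: "transpose (X - Y) = transpose X - transpose Y"
  by (simp add: transpose_def vec_eq_iff)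

lemma matrix_vector_mult_axis [simp]: "(A *v axis j 1) $ i = A $ i $ j"
  for A :: "'a::semiring_1^'n^'m"
  by (simp add: matrix_vector_mult_def axis_def if_distrib if_distribR cong: if_cong)

lemma uminus_matrix_vector [simp]: "(- N) *v x = - (N *v x)"
  for N :: "'a::ring_1^'n^'m"
  by (simp add: matrix_vector_mult_def vec_eq_iff sum_negf)

lemma matrix_add_rdistrib: "(X + Y) ** Z = X ** Z + Y ** Z"
  for X :: "'a::semiring_1^'n^'m"
  by (simp add: vec_eq_iff matrix_matrix_mult_def distrib_right sum.distrib)

section \<open>Matrices of full row rank\<close>

lemma rank_zero_matrix [simp]: "rank (0::'a::field^'n^'m) = 0"
proof -
  have "rows (0::'a^'n^'m) = {0}"
    by (auto simp: rows_def row_def vec_eq_iff)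
  then show ?thesis
    by (simp add: row_rank_def_gen)
qed

lemma full_row_rank_right_invertible:
  fixes A :: "'a::field^'n^'m"
  assumes "rank A = CARD('m)"
  shows "\<exists>B. A ** B = mat 1"
proof -
  have "c j = 0" if sum: "(\<Sum>i\<in>UNIV. c i *s row i A) = 0" for c j
  proof (rule ccontr)
    assume "c j \<noteq> 0"
    let ?W = "(\<lambda>i. row i A) ` (UNIV - {j})"
    have "(\<Sum>i\<in>UNIV. c i *s row i A) = c j *s row j A + (\<Sum>i\<in>UNIV - {j}. c i *s row i A)"
      by (simp add: sum.remove)
    then have "c j *s row j A = - (\<Sum>i\<in>UNIV - {j}. c i *s row i A)"
      using sum by (simp add: eq_neg_iff_add_eq_0)
    moreover have "(\<Sum>i\<in>UNIV - {j}. c i *s row i A) \<in> vec.span ?W"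
      by (intro vec.span_sum) (auto intro: vec.span_scale vec.span_base)
    ultimately have "c j *s row j A \<in> vec.span ?W"
      by (simp add: vec.span_neg)
    then have "row j A \<in> vec.span ?W"
      using \<open>c j \<noteq> 0\<close> vec.span_scale[of "c j *s row j A" ?W "1 / c j"] by simp
    then have "rows A \<subseteq> vec.span ?W"
      unfolding rows_def by (auto intro: vec.span_base)
    then have "vec.dim (rows A) \<le> card ?W"
      by (intro vec.dim_le_card) auto
    also have "\<dots> < CARD('m)"
      by (metis card_Diff1_less card_image_le finite finite_Diff iso_tuple_UNIV_I le_less_trans)
    finally show False
      using assms by (simp add: row_rank_def_gen)
  qed
  then show ?thesis
    using matrix_right_invertible_independent_rows by blast
qed

lemma independent4_spanning:
  fixes a1 a2 a3 a4 :: "'a::field^4"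
  assumes "\<And>v1 v2 v3 v4. v1 *s a1 + v2 *s a2 + v3 *s a3 + v4 *s a4 = 0 \<Longrightarrow>
             v1 = 0 \<and> v2 = 0 \<and> v3 = 0 \<and> v4 = 0"
  shows "\<exists>v1 v2 v3 v4. u = v1 *s a1 + v2 *s a2 + v3 *s a3 + v4 *s a4"
proof -
  define G :: "'a^4^4" where
    "G = (\<chi> i j. if j = 1 then a1$i else if j = 2 then a2$i else if j = 3 then a3$i else a4$i)"
  have sum4: "sum f UNIV = f 1 + f 2 + f 3 + f (4::4)" for f :: "4 \<Rightarrow> 'a"
    unfolding UNIV_4 by (simp add: add.assoc)
  have G: "G *v v = v$1 *s a1 + v$2 *s a2 + v$3 *s a3 + v$4 *s a4" for v
    by (simp add: G_def vec_eq_iff matrix_vector_mult_def sum4 mult.commute)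
  have "\<forall>v. G *v v = 0 \<longrightarrow> v = 0"
  proof (intro allI impI)
    fix v
    assume "G *v v = 0"
    then have "v$1 = 0 \<and> v$2 = 0 \<and> v$3 = 0 \<and> v$4 = 0"
      using assms[of "v$1" "v$2" "v$3" "v$4"] by (simp only: G)
    then show "v = 0"
      by (simp add: vec_eq_iff forall_4)
  qed
  then obtain B :: "'a^4^4" where "B ** G = mat 1"
    unfolding matrix_left_invertible_ker[symmetric] by blast
  then have "G ** B = mat 1"
    by (simp add: matrix_left_right_inverse)
  then have "u = G *v (B *v u)"
    by (simp add: matrix_vector_mul_assoc)
  then show ?thesis
    unfolding G by blast
qed

lemma kernel_3x4_eq_line:
  fixes A :: "'a::field^4^3"
  assumes R: "A ** R = mat 1" and c: "c \<noteq> 0" "A *v c = 0" and y: "A *v y = 0"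
  shows "\<exists>s. y = s *s c"
proof (cases "y = 0")
  case True
  then show ?thesis
    by (intro exI[of _ 0]) simp
next
  case False
  let ?e = "\<lambda>i. axis i 1 :: 'a^3"
  have A_comb: "A *v (v1 *s (R *v ?e 1) + v2 *s (R *v ?e 2) + v3 *s (R *v ?e 3) + v4 *s y)
      = v1 *s ?e 1 + v2 *s ?e 2 + v3 *s ?e 3" for v1 v2 v3 v4
    by (simp add: matrix_vector_right_distrib vec.linear_scale matrix_vector_mul_assoc R y)
  have e_indep: "v1 = 0 \<and> v2 = 0 \<and> v3 = 0"
    if "v1 *s ?e 1 + v2 *s ?e 2 + v3 *s ?e 3 = 0" for v1 v2 v3
    using that by (simp add: vec_eq_iff forall_3 axis_def)
  have "\<exists>v1 v2 v3 v4. c = v1 *s (R *v ?e 1) + v2 *s (R *v ?e 2) + v3 *s (R *v ?e 3) + v4 *s y"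
  proof (rule independent4_spanning)
    fix v1 v2 v3 v4
    assume h: "v1 *s (R *v ?e 1) + v2 *s (R *v ?e 2) + v3 *s (R *v ?e 3) + v4 *s y = 0"
    then have "v1 = 0 \<and> v2 = 0 \<and> v3 = 0"
      using A_comb[of v1 v2 v3 v4] e_indep by simp
    with h False show "v1 = 0 \<and> v2 = 0 \<and> v3 = 0 \<and> v4 = 0"
      by simp
  qed
  then obtain v1 v2 v3 v4 where cv:
      "c = v1 *s (R *v ?e 1) + v2 *s (R *v ?e 2) + v3 *s (R *v ?e 3) + v4 *s y"
    by blast
  then have "v1 = 0 \<and> v2 = 0 \<and> v3 = 0"
    using A_comb[of v1 v2 v3 v4] c e_indep by simp
  with cv c have "c = v4 *s y" and "v4 \<noteq> 0"
    by auto
  then have "y = (1 / v4) *s c"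
    by simp
  then show ?thesis ..
qed

lemma mult_right_inverse_cancel:
  fixes A :: "'a::field^4^3" and B :: "'a^4^'k"
  assumes R: "A ** R = mat 1" and c: "c \<noteq> 0" "A *v c = 0" and "B *v c = 0"
  shows "B ** (R ** A) = B"
proof -
  have "B *v (R *v (A *v y)) = B *v y" for y
  proof -
    have "A *v (y - R *v (A *v y)) = 0"
      using R by (simp add: matrix_vector_mult_diff_distrib matrix_vector_mul_assoc matrix_mul_assoc)
    then obtain s where "y - R *v (A *v y) = s *s c"
      using kernel_3x4_eq_line[OF R c] by blast
    then have "B *v (y - R *v (A *v y)) = 0"
      using \<open>B *v c = 0\<close> by (simp add: vec.linear_scale)
    then show ?thesis
      by (simp add: matrix_vector_mult_diff_distrib)
  qed
  then show ?thesis
    by (simp add: matrix_eq matrix_vector_mul_assoc)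
qed

section \<open>Symmetric and skew forms on C^4\<close>

lemma qf_add_symmetric:
  assumes "transpose S = S"
  shows "qf S (x + y) = qf S x + qf S y + 2 * bdot x (S *v y)"
proof -
  have "bdot y (S *v x) = bdot x (S *v y)"
    using bdot_vector_matrix[of y S x] assms
    by (metis bdot_commute transpose_matrix_vector)
  then show ?thesis
    by (simp add: qf_def matrix_vector_right_distrib)
qed

lemma symmetric_eq_0_if_qf_eq_0:
  assumes "transpose S = S" and "\<And>x. qf S x = 0"
  shows "S = 0"
proof (rule matrix_eqI_bdot)
  fix x y
  show "bdot x (S *v y) = bdot x (0 *v y)"
    using qf_add_symmetric[OF assms(1), of x y] assms(2) by simp
qed

lemma skew_bdot_swap:
  assumes "transpose N = - N"
  shows "bdot y (N *v x) = - bdot x (N *v y)"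
proof -
  have "bdot y (N *v x) = bdot (transpose N *v y) x"
    by (simp add: bdot_vector_matrix)
  also have "\<dots> = - bdot x (N *v y)"
    using assms by (simp add: bdot_commute)
  finally show ?thesis .
qed

lemma skew_bdot_self:
  assumes "transpose N = - N"
  shows "bdot x (N *v x) = 0"
  using skew_bdot_swap[OF assms, of x x] by simp

lemma skew_bdot_combination:
  assumes sk: "transpose N = - N" and N1: "N *v c1 = 0" and N2: "N *v c2 = 0"
  shows "bdot (a1 *s x + a2 *s y + a3 *s c1 + a4 *s c2)
            (N *v (b1 *s x + b2 *s y + b3 *s c1 + b4 *s c2))
        = (a1 * b2 - a2 * b1) * bdot x (N *v y)"
proof -
  have "N *v (b1 *s x + b2 *s y + b3 *s c1 + b4 *s c2) = b1 *s (N *v x) + b2 *s (N *v y)"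
    by (simp add: matrix_vector_right_distrib vec.linear_scale N1 N2)
  moreover have "bdot c1 (N *v z) = 0" "bdot c2 (N *v z) = 0" for z
    using skew_bdot_swap[OF sk, of _ z] N1 N2 by simp_all
  ultimately show ?thesis
    using skew_bdot_self[OF sk] skew_bdot_swap[OF sk, of y x] by (simp add: ring_distribs)
qed

text \<open>Pick x, y with a nonzero pairing under N'; then x, y, c1, c2 form a basis, and a skew
  form vanishing on c1, c2 is determined by its value on (x, y).\<close>

lemma skew_null_vectors_proportional:
  fixes N N' :: "complex^4^4"
  assumes indep: "\<And>a b. a *s c1 + b *s c2 = 0 \<Longrightarrow> a = 0 \<and> b = 0"
    and N: "transpose N = - N" "N *v c1 = 0" "N *v c2 = 0"
    and N': "transpose N' = - N'" "N' *v c1 = 0" "N' *v c2 = 0"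
    and "N' \<noteq> 0"
  shows "\<exists>t. N = mat t ** N'"
proof -
  obtain i j where "N' $ i $ j \<noteq> 0"
    using \<open>N' \<noteq> 0\<close> by (metis vec_eq_iff zero_index)
  define x :: "complex^4" where "x = axis i 1"
  define y :: "complex^4" where "y = axis j 1"
  define d where "d = bdot x (N' *v y)"
  have "d \<noteq> 0"
    using \<open>N' $ i $ j \<noteq> 0\<close> by (simp add: d_def x_def y_def)
  note expand = skew_bdot_combination[OF N] skew_bdot_combination[OF N']
  have basis: "\<exists>v1 v2 v3 v4. u = v1 *s x + v2 *s y + v3 *s c1 + v4 *s c2" for u
  proof (rule independent4_spanning)
    fix v1 v2 v3 v4
    assume h: "v1 *s x + v2 *s y + v3 *s c1 + v4 *s c2 = 0"
    have "v1 * d = bdot (v1 *s x + v2 *s y + v3 *s c1 + v4 *s c2)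
                        (N' *v (0 *s x + 1 *s y + 0 *s c1 + 0 *s c2))"
      unfolding expand d_def by simp
    then have "v1 = 0"
      using h \<open>d \<noteq> 0\<close> by simp
    have "v2 * d = bdot (1 *s x + 0 *s y + 0 *s c1 + 0 *s c2)
                        (N' *v (v1 *s x + v2 *s y + v3 *s c1 + v4 *s c2))"
      unfolding expand d_def by simp
    then have "v2 = 0"
      using h \<open>d \<noteq> 0\<close> by simp
    with h \<open>v1 = 0\<close> indep[of v3 v4] show "v1 = 0 \<and> v2 = 0 \<and> v3 = 0 \<and> v4 = 0"
      by simp
  qed
  define t where "t = bdot x (N *v y) / d"
  have "N = mat t ** N'"
  proof (rule matrix_eqI_bdot)
    fix u w :: "complex^4"
    obtain a1 a2 a3 a4 where u: "u = a1 *s x + a2 *s y + a3 *s c1 + a4 *s c2"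
      using basis by blast
    obtain b1 b2 b3 b4 where w: "w = b1 *s x + b2 *s y + b3 *s c1 + b4 *s c2"
      using basis by blast
    show "bdot u (N *v w) = bdot u ((mat t ** N') *v w)"
      unfolding mat_mult_matrix_vector bdot_scale_right u w expand
      using \<open>d \<noteq> 0\<close> by (simp add: t_def d_def)
  qed
  then show ?thesis ..
qed

definition outer :: "complex^'n \<Rightarrow> complex^'n \<Rightarrow> complex^'n^'n" where
  "outer a b = (\<chi> i j. a$i * b$j)"

lemma outer_matrix_vector [simp]: "outer a b *v c = bdot b c *s a"
  by (simp add: outer_def matrix_vector_mult_def bdot_def vec_eq_iff sum_distrib_left mult_ac)

lemma transpose_outer [simp]: "transpose (outer a b) = outer b a"
  by (simp add: outer_def transpose_def vec_eq_iff mult.commute)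

text \<open>B = S/2 + K with K skew, K c1 = -S c1/2 and K c2 = S c2/2 gives B c1 = 0 and
  B^T c2 = S c2/2 - K c2 = 0. That c1 and c2 lie on S is exactly what makes these values of K
  compatible with skewness; K = X - X^T realises them using the dual vectors g1, g2.\<close>

lemma symmetric_split_null:
  fixes S :: "complex^4^4"
  assumes S: "transpose S = S" "qf S c1 = 0" "qf S c2 = 0"
    and g: "bdot g1 c1 = 1" "bdot g1 c2 = 0" "bdot g2 c1 = 0" "bdot g2 c2 = 1"
  shows "\<exists>B. B *v c1 = 0 \<and> c2 v* B = 0 \<and> B + transpose B = S"
proof -
  define u where "u = (- 1/2) *s (S *v c1)"
  define w where "w = (1/2) *s (S *v c2)"
  define \<alpha> where "\<alpha> = - bdot w c1"
  define X where "X = outer u g1 + outer w g2 + outer (\<alpha> *s g1) g2"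
  define K where "K = X - transpose X"
  define B where "B = mat (1/2) ** S + K"
  have "bdot u c1 = 0" "bdot w c2 = 0"
    using S(2,3) by (simp_all add: u_def w_def qf_def bdot_commute)
  moreover have "bdot u c2 = \<alpha>"
    using bdot_vector_matrix[of c2 S c1] S(1)
    by (simp add: u_def w_def \<alpha>_def bdot_commute flip: transpose_matrix_vector)
  ultimately have "K *v c1 = u" "K *v c2 = w"
    by (simp_all add: K_def X_def g \<alpha>_def matrix_vector_mult_diff_rdistrib
        matrix_vector_mult_add_rdistrib flip: transpose_matrix_vector)
  moreover have K_skew: "transpose K = - K"
    by (simp add: K_def)
  ultimately have "B *v c1 = 0" and "c2 v* B = 0"
    by (simp_all add: B_def u_def w_def matrix_vector_mult_add_rdistrib
        matrix_vector_mult_diff_rdistrib S(1) flip: transpose_matrix_vector)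
  moreover have "B + transpose B = S"
    by (simp add: B_def S(1) K_skew vec_eq_iff)
  ultimately show ?thesis
    by blast
qed

lemma exists_dual_vector:
  fixes A :: "complex^'n^'m"
  assumes "A *v c \<noteq> 0"
  shows "\<exists>g. bdot g c = 1 \<and> (\<forall>d. A *v d = 0 \<longrightarrow> bdot g d = 0)"
proof -
  obtain k where k: "(A *v c) $ k \<noteq> 0"
    using assms by (metis vec_eq_iff zero_index)
  define g where "g = axis k (1 / (A *v c) $ k) v* A"
  have "bdot g d = (A *v d) $ k / (A *v c) $ k" for d
    by (simp add: g_def bdot_vector_matrix)
  then show ?thesis
    using k by (intro exI[of _ g]) simp
qed

section \<open>The pullback quadric\<close>

definition pullback_form ::
    "complex^'n^'m \<Rightarrow> complex^'n^'m \<Rightarrow> complex^'m^'m \<Rightarrow> complex^'n^'n" where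
  "pullback_form A1 A2 M = transpose A2 ** M ** A1"

definition pullback_quadric ::
    "complex^'n^'m \<Rightarrow> complex^'n^'m \<Rightarrow> complex^'m^'m \<Rightarrow> complex^'n^'n" where
  "pullback_quadric A1 A2 M = pullback_form A1 A2 M + transpose (pullback_form A1 A2 M)"

lemma pullback_form_add [simp]:
  "pullback_form A1 A2 (X + Y) = pullback_form A1 A2 X + pullback_form A1 A2 Y"
  by (simp add: pullback_form_def matrix_add_ldistrib matrix_add_rdistrib)

lemma pullback_form_diff [simp]:
  "pullback_form A1 A2 (X - Y) = pullback_form A1 A2 X - pullback_form A1 A2 Y"
  by (simp add: eq_diff_eq flip: pullback_form_add)

lemma pullback_form_mat_mult [simp]:
  "pullback_form A1 A2 (mat a ** X) = mat a ** pullback_form A1 A2 X"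
  by (simp add: pullback_form_def mat_mult_assoc_right)

lemma pullback_quadric_linear:
  "pullback_quadric A1 A2 (mat a ** X + mat b ** Y) =
     mat a ** pullback_quadric A1 A2 X + mat b ** pullback_quadric A1 A2 Y"
  by (simp add: pullback_quadric_def matrix_add_ldistrib)

lemma transpose_pullback_quadric [simp]:
  "transpose (pullback_quadric A1 A2 M) = pullback_quadric A1 A2 M"
  by (simp add: pullback_quadric_def add.commute)

lemma qf_pullback_quadric:
  "qf (pullback_quadric A1 A2 M) p = 2 * bdot (A2 *v p) (M *v (A1 *v p))"
proof -
  let ?N = "pullback_form A1 A2 M"
  have "qf (pullback_quadric A1 A2 M) p = bdot p (?N *v p) + bdot p (transpose ?N *v p)"
    by (simp only: qf_def pullback_quadric_def matrix_vector_mult_add_rdistrib bdot_add_right)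
  also have "bdot p (transpose ?N *v p) = bdot p (?N *v p)"
    by (metis bdot_commute bdot_vector_matrix vector_transpose_matrix)
  also have "bdot p (?N *v p) = bdot (A2 *v p) (M *v (A1 *v p))"
    by (simp only: pullback_form_def vector_transpose_matrix matrix_vector_mul_assoc[symmetric]
        bdot_vector_matrix[symmetric])
  finally show ?thesis
    by simp
qed

lemma pullback_quadric_eq_0_if_epipolar:
  fixes A1 A2 :: "complex^4^'m"
  assumes "\<forall>p. bdot (A2 *v p) (F *v (A1 *v p)) = 0"
  shows "pullback_quadric A1 A2 F = 0"
  by (rule symmetric_eq_0_if_qf_eq_0) (simp_all add: qf_pullback_quadric assms)

locale projection_pair =
  fixes A1 A2 :: "complex^4^3" and c1 c2 :: "complex^4"
  assumes rank_A1: "rank A1 = 3" and rank_A2: "rank A2 = 3"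
    and c1_nonzero: "c1 \<noteq> 0" and A1_c1: "A1 *v c1 = 0"
    and c2_nonzero: "c2 \<noteq> 0" and A2_c2: "A2 *v c2 = 0"
    and centers_distinct: "\<forall>t. c1 \<noteq> t *s c2"
begin

lemma right_inverse_A1: obtains R1 where "A1 ** R1 = mat 1"
  using full_row_rank_right_invertible[of A1] rank_A1 by auto

lemma right_inverse_A2: obtains R2 where "A2 ** R2 = mat 1"
  using full_row_rank_right_invertible[of A2] rank_A2 by auto

lemma centers_independent:
  assumes "a *s c1 + b *s c2 = 0"
  shows "a = 0 \<and> b = 0"
proof (cases "a = 0")
  case True
  then show ?thesis
    using assms c2_nonzero by simp
next
  case False
  then have "c1 = (- b / a) *s c2"
    using assms by (simp add: vec_eq_iff field_simps add_eq_0_iff)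
  then show ?thesis
    using centers_distinct by blast
qed

lemma A2_c1_nonzero: "A2 *v c1 \<noteq> 0"
proof
  assume "A2 *v c1 = 0"
  with right_inverse_A2 obtain s where "c1 = s *s c2"
    using kernel_3x4_eq_line c2_nonzero A2_c2 by metis
  then show False
    using centers_distinct by blast
qed

lemma A1_c2_nonzero: "A1 *v c2 \<noteq> 0"
proof
  assume "A1 *v c2 = 0"
  with right_inverse_A1 obtain s where "c2 = s *s c1"
    using kernel_3x4_eq_line c1_nonzero A1_c1 by metis
  then have "1 *s c2 + (- s) *s c1 = 0"
    by simp
  then show False
    using centers_independent[of "- s" 1] by (simp add: add.commute)
qed

lemma pullback_form_eq_0_iff: "pullback_form A1 A2 M = 0 \<longleftrightarrow> M = 0"
proof
  obtain R1 R2 where R: "A1 ** R1 = mat 1" "A2 ** R2 = mat 1"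
    using right_inverse_A1 right_inverse_A2 by metis
  have "transpose R2 ** pullback_form A1 A2 M ** R1 = transpose (A2 ** R2) ** M ** (A1 ** R1)"
    by (simp add: pullback_form_def matrix_transpose_mul matrix_mul_assoc)
  also have "\<dots> = M"
    by (simp add: R)
  finally show "pullback_form A1 A2 M = 0 \<Longrightarrow> M = 0"
    by auto
qed (simp add: pullback_form_def)

lemma pullback_form_c1: "pullback_form A1 A2 M *v c1 = 0"
  by (simp add: pullback_form_def A1_c1 flip: matrix_vector_mul_assoc)

lemma c2_pullback_form: "c2 v* pullback_form A1 A2 M = 0"
  by (simp add: pullback_form_def A2_c2 flip: vector_matrix_mul_assoc)

lemma pullback_form_surj:
  assumes "B *v c1 = 0" and "c2 v* B = 0"
  shows "\<exists>M. pullback_form A1 A2 M = B"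
proof -
  obtain R1 R2 where R: "A1 ** R1 = mat 1" "A2 ** R2 = mat 1"
    using right_inverse_A1 right_inverse_A2 by metis
  have "B ** (R1 ** A1) = B"
    using mult_right_inverse_cancel[OF R(1) c1_nonzero A1_c1 assms(1)] .
  moreover have "transpose B ** (R2 ** A2) = transpose B"
    using mult_right_inverse_cancel[OF R(2) c2_nonzero A2_c2, of "transpose B"] assms(2) by simp
  then have "transpose (R2 ** A2) ** B = B"
    by (metis matrix_transpose_mul transpose_transpose)
  ultimately have "pullback_form A1 A2 (transpose R2 ** B ** R1) = B"
    by (simp add: pullback_form_def matrix_transpose_mul matrix_mul_assoc)
  then show ?thesis ..
qed

lemma pullback_quadric_eq_0_iff:
  assumes F: "pullback_quadric A1 A2 F = 0" "F \<noteq> 0"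
  shows "pullback_quadric A1 A2 M = 0 \<longleftrightarrow> (\<exists>t. M = mat t ** F)"
proof
  have skew: "transpose (pullback_form A1 A2 X) = - pullback_form A1 A2 X"
    if "pullback_quadric A1 A2 X = 0" for X
    using that unfolding pullback_quadric_def by (metis add.commute eq_neg_iff_add_eq_0)
  have null: "pullback_form A1 A2 X *v c1 = 0" "pullback_form A1 A2 X *v c2 = 0"
    if "pullback_quadric A1 A2 X = 0" for X
    using pullback_form_c1[of X] c2_pullback_form[of X] skew[OF that]
    by (simp_all flip: transpose_matrix_vector)
  assume "pullback_quadric A1 A2 M = 0"
  moreover have "pullback_form A1 A2 F \<noteq> 0"
    using F(2) pullback_form_eq_0_iff by blast
  ultimately obtain t where "pullback_form A1 A2 M = mat t ** pullback_form A1 A2 F"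
    using skew_null_vectors_proportional[OF centers_independent skew null skew null] F(1) by blast
  then have "pullback_form A1 A2 (M - mat t ** F) = 0"
    by simp
  then have "M = mat t ** F"
    by (simp only: pullback_form_eq_0_iff right_minus_eq)
  then show "\<exists>t. M = mat t ** F" ..
qed (use F(1) pullback_quadric_linear[of A1 A2 _ F 0 F] in auto)

lemma range_pullback_quadric:
  "range (pullback_quadric A1 A2) = {S. transpose S = S \<and> qf S c1 = 0 \<and> qf S c2 = 0}"
proof (intro set_eqI iffI)
  fix S
  assume "S \<in> range (pullback_quadric A1 A2)"
  then show "S \<in> {S. transpose S = S \<and> qf S c1 = 0 \<and> qf S c2 = 0}"
    by (auto simp: qf_pullback_quadric A1_c1 A2_c2)
next
  fix S
  assume "S \<in> {S. transpose S = S \<and> qf S c1 = 0 \<and> qf S c2 = 0}"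
  then have S: "transpose S = S" "qf S c1 = 0" "qf S c2 = 0"
    by auto
  obtain g1 where "bdot g1 c1 = 1" "bdot g1 c2 = 0"
    using exists_dual_vector[OF A2_c1_nonzero] A2_c2 by blast
  moreover obtain g2 where "bdot g2 c2 = 1" "bdot g2 c1 = 0"
    using exists_dual_vector[OF A1_c2_nonzero] A1_c1 by blast
  ultimately obtain B where "B *v c1 = 0" "c2 v* B = 0" "B + transpose B = S"
    using symmetric_split_null[OF S] by metis
  then show "S \<in> range (pullback_quadric A1 A2)"
    using pullback_form_surj by (auto simp: pullback_quadric_def)
qed

end

section \<open>Lines through [F] and points of P(Sym^2 C^4)\<close>

lemma self_mem_qpoint: "S \<in> qpoint S"
  unfolding qpoint_def by (intro CollectI exI[of _ 1]) simp

lemma qpoint_eq_iff: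
  assumes "S \<noteq> 0"
  shows "qpoint S = qpoint T \<longleftrightarrow> S \<in> qpoint T"
proof
  assume "S \<in> qpoint T"
  then obtain b where b: "S = mat b ** T"
    unfolding qpoint_def by blast
  with assms have "b \<noteq> 0"
    by auto
  have "mat c ** S = mat (c * b) ** T" for c
    using b by simp
  moreover have "mat c ** T = mat (c / b) ** S" for c
    using b \<open>b \<noteq> 0\<close> by simp
  ultimately show "qpoint S = qpoint T"
    unfolding qpoint_def by blast
qed (use self_mem_qpoint in blast)

lemma self_mem_pline: "M \<in> pline F M"
  unfolding pline_def by (intro CollectI exI[of _ 0] exI[of _ 1]) simp

lemma pline_subset:
  assumes "X \<in> pline F Y"
  shows "pline F X \<subseteq> pline F Y"
proof
  obtain a b where X: "X = mat a ** F + mat b ** Y"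
    using assms unfolding pline_def by blast
  fix Z
  assume "Z \<in> pline F X"
  then obtain c d where "Z = mat c ** F + mat d ** X"
    unfolding pline_def by blast
  then have "Z = mat (c + d * a) ** F + mat (d * b) ** Y"
    unfolding X by (simp add: vec_eq_iff algebra_simps)
  then show "Z \<in> pline F Y"
    unfolding pline_def by blast
qed

lemma pline_eq_iff:
  assumes "\<forall>t. X \<noteq> mat t ** F"
  shows "pline F X = pline F Y \<longleftrightarrow> X \<in> pline F Y"
proof
  assume "X \<in> pline F Y"
  then obtain a b where X: "X = mat a ** F + mat b ** Y"
    unfolding pline_def by blast
  with assms have "b \<noteq> 0"
    by auto
  with X have "Y = mat (- a / b) ** F + mat (1 / b) ** X"
    by (simp add: vec_eq_iff field_simps)
  then have "Y \<in> pline F X"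
    unfolding pline_def by blast
  with \<open>X \<in> pline F Y\<close> show "pline F X = pline F Y"
    using pline_subset by blast
qed (use self_mem_pline in blast)

lemma lines_through_eq_pline:
  assumes "L \<in> lines_through F" "M \<in> L" "\<forall>t. M \<noteq> mat t ** F"
  shows "L = pline F M"
  using assms pline_eq_iff unfolding lines_through_def by blast

context
  fixes \<Phi> :: "complex^3^3 \<Rightarrow> complex^4^4" and F :: "complex^3^3"
  assumes linear: "\<And>a b X Y. \<Phi> (mat a ** X + mat b ** Y) = mat a ** \<Phi> X + mat b ** \<Phi> Y"
    and kernel: "\<And>M. \<Phi> M = 0 \<longleftrightarrow> (\<exists>t. M = mat t ** F)"
begin

lemma mem_pline_iff_mem_qpoint: "X \<in> pline F Y \<longleftrightarrow> \<Phi> X \<in> qpoint (\<Phi> Y)"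
proof
  assume "X \<in> pline F Y"
  then obtain a b where "X = mat a ** F + mat b ** Y"
    unfolding pline_def by blast
  then have "\<Phi> X = mat b ** \<Phi> Y"
    using kernel[of F] linear by (metis add_0 mat_0 matrix_mul_lid times0_right)
  then show "\<Phi> X \<in> qpoint (\<Phi> Y)"
    unfolding qpoint_def by blast
next
  assume "\<Phi> X \<in> qpoint (\<Phi> Y)"
  then obtain b where "\<Phi> X = mat b ** \<Phi> Y"
    unfolding qpoint_def by blast
  then have "\<Phi> (mat 1 ** X + mat (- b) ** Y) = 0"
    unfolding linear by (simp add: vec_eq_iff)
  then obtain t where "mat 1 ** X + mat (- b) ** Y = mat t ** F"
    using kernel by blast
  then have "X = mat t ** F + mat b ** Y"
    by (simp add: vec_eq_iff algebra_simps)
  then show "X \<in> pline F Y"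
    unfolding pline_def by blast
qed

lemma pline_eq_iff_qpoint_eq:
  assumes "\<forall>t. X \<noteq> mat t ** F"
  shows "pline F X = pline F Y \<longleftrightarrow> qpoint (\<Phi> X) = qpoint (\<Phi> Y)"
  using assms kernel[of X] by (simp add: pline_eq_iff qpoint_eq_iff mem_pline_iff_mem_qpoint)

lemma bij_betw_lines_through_qpoints:
  "\<exists>f. bij_betw f (lines_through F) (qpoint ` (range \<Phi> - {0})) \<and>
     (\<forall>L\<in>lines_through F. \<forall>M\<in>L. (\<forall>t. M \<noteq> mat t ** F) \<longrightarrow> f L = qpoint (\<Phi> M))"
proof -
  define f where "f L = qpoint (\<Phi> (SOME M. M \<in> L \<and> (\<forall>t. M \<noteq> mat t ** F)))" for L
  have f: "f L = qpoint (\<Phi> M)"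
    if L: "L \<in> lines_through F" and M: "M \<in> L" "\<forall>t. M \<noteq> mat t ** F" for L M
  proof -
    let ?M = "SOME M. M \<in> L \<and> (\<forall>t. M \<noteq> mat t ** F)"
    from M have "\<exists>M. M \<in> L \<and> (\<forall>t. M \<noteq> mat t ** F)"
      by blast
    then have "?M \<in> L \<and> (\<forall>t. ?M \<noteq> mat t ** F)"
      by (rule someI_ex)
    then have M': "?M \<in> L" "\<forall>t. ?M \<noteq> mat t ** F"
      by blast+
    have "pline F ?M = pline F M"
      using lines_through_eq_pline[OF L M'] lines_through_eq_pline[OF L M] by simp
    then show ?thesis
      unfolding f_def using pline_eq_iff_qpoint_eq[OF M'(2)] by blast
  qed
  have "inj_on f (lines_through F)"
  proof (rule inj_onI)
    fix L1 L2
    assume L: "L1 \<in> lines_through F" "L2 \<in> lines_through F" and "f L1 = f L2"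
    then obtain M1 M2 where M: "L1 = pline F M1" "\<forall>t. M1 \<noteq> mat t ** F"
      "L2 = pline F M2" "\<forall>t. M2 \<noteq> mat t ** F"
      unfolding lines_through_def by blast
    with L \<open>f L1 = f L2\<close> have "qpoint (\<Phi> M1) = qpoint (\<Phi> M2)"
      using f self_mem_pline by metis
    then show "L1 = L2"
      using M pline_eq_iff_qpoint_eq by blast
  qed
  moreover have "f ` lines_through F = qpoint ` (range \<Phi> - {0})"
  proof -
    have "lines_through F = pline F ` {M. \<forall>t. M \<noteq> mat t ** F}"
      unfolding lines_through_def by blast
    then have "f ` lines_through F = (\<lambda>M. f (pline F M)) ` {M. \<forall>t. M \<noteq> mat t ** F}"
      by (simp add: image_image)
    also have "\<dots> = (\<lambda>M. qpoint (\<Phi> M)) ` {M. \<forall>t. M \<noteq> mat t ** F}"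
      using f self_mem_pline \<open>lines_through F = _\<close> by (intro image_cong) auto
    also have "\<dots> = qpoint ` \<Phi> ` {M. \<forall>t. M \<noteq> mat t ** F}"
      by (simp add: image_image)
    also have "{M. \<forall>t. M \<noteq> mat t ** F} = {M. \<Phi> M \<noteq> 0}"
      using kernel by auto
    also have "\<Phi> ` {M. \<Phi> M \<noteq> 0} = range \<Phi> - {0}"
      by auto
    finally show ?thesis .
  qed
  ultimately have "bij_betw f (lines_through F) (qpoint ` (range \<Phi> - {0}))"
    unfolding bij_betw_def ..
  then show ?thesis
    using f by (intro exI[of _ f] conjI ballI impI)
qed

end

theorem mainTheorem10:
  fixes A1 A2 :: "complex^4^3" and c1 c2 :: "complex^4" and F :: "complex^3^3"
  assumes "rank A1 = 3" and "rank A2 = 3"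
    and "c1 \<noteq> 0" and "A1 *v c1 = 0"
    and "c2 \<noteq> 0" and "A2 *v c2 = 0"
    and "\<forall>t::complex. c1 \<noteq> t *s c2"
    and "rank F = 2"
    and "\<forall>p. bdot (A2 *v p) (F *v (A1 *v p)) = 0"
  shows "\<exists>f. bij_betw f (lines_through F) (quadrics_through c1 c2) \<and>
           (\<forall>L\<in>lines_through F. \<forall>M\<in>L. (\<forall>t. M \<noteq> mat t ** F) \<longrightarrow>
              f L = qpoint (transpose A2 ** M ** A1 + transpose A1 ** transpose M ** A2))"
proof -
  interpret projection_pair A1 A2 c1 c2
    using assms by unfold_locales
  have "pullback_quadric A1 A2 F = 0"
    using assms(9) by (rule pullback_quadric_eq_0_if_epipolar)
  moreover have "F \<noteq> 0"
    using assms(8) by auto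
  ultimately have kernel: "pullback_quadric A1 A2 M = 0 \<longleftrightarrow> (\<exists>t. M = mat t ** F)" for M
    by (rule pullback_quadric_eq_0_iff)
  have quadrics: "quadrics_through c1 c2 = qpoint ` (range (pullback_quadric A1 A2) - {0})"
    unfolding quadrics_through_def range_pullback_quadric by blast
  have formula: "transpose A2 ** M ** A1 + transpose A1 ** transpose M ** A2 = pullback_quadric A1 A2 M"
    for M
    by (simp add: pullback_quadric_def pullback_form_def matrix_transpose_mul matrix_mul_assoc)
  show ?thesis
    unfolding quadrics formula
    by (rule bij_betw_lines_through_qpoints[OF pullback_quadric_linear kernel])
qed

end
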